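(* Assume Assumption A-0 holds, let $T\ge1$, let $\psi_0,\dots,\psi_T$ be bounded measurable functions on $\mathbb{R}^d$ and $\boldsymbol\lambda=(\lambda_0,\dots,\lambda_T)\in\mathbb{R}^{T+1}$. Set $\rho_{T-1}=\lambda_{T-1}\psi_{T-1}+\frac{\lambda_T}{\kappa_T}L_T(\psi_T-m_T(\psi_T))$ and $\tilde{\boldsymbol\lambda}=(\lambda_0,\dots,\lambda_{T-2},1)\in\mathbb{R}^T$. Then $$\langle\tilde{\boldsymbol\lambda},\mathbf V_{T-1}(\psi_0,\dots,\psi_{T-2},\rho_{T-1})\,\tilde{\boldsymbol\lambda}\rangle=\langle\boldsymbol\lambda,\mathbf V_T(\psi_0,\dots,\psi_T)\,\boldsymbol\lambda\rangle-\lambda_T^2\sigma_T^2(\psi_T).$$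
   Context: Hidden Markov model with Markov chain $(X_t)$ on $\mathbb{R}^d$ having initial density $a_0$ and transition densities $a_t(x,x')$ w.r.t. a measure $\mu$, and observation densities $b_t(x,y)$; observations $y_1,\dots,y_T$ fixed. Filter density: $f_{0|0}=a_0$, $f_{t|t}(x)\propto b_t(x,y_t)\int f_{t-1|t-1}(u)a_t(u,x)\mu(du)$ (normalized). Notation: $m_t(\psi)=\int\psi f_{t|t}d\mu$; $L_t\psi(x)=\int a_t(x,u)b_t(u,y_t)\psi(u)\mu(du)$; $\mathbb{1}\equiv1$. Assumption A-0: for every $t\ge1$, $\sup_xL_t\mathbb{1}(x)<\infty$ and $L_t\mathbb{1}(x)>0$ for all $x$; $\kappa_t:=\int L_t\mathbb{1}\,f_{t-1|t-1}d\mu>0$. Variance quantities: $\sigma_t^2(\psi)=\int(\psi-m_t(\psi))^2f_{t|t}d\mu$; $V_0(\psi)=\sigma_0^2(\psi)$, $V_t(\psi)=\sigma_t^2(\psi)+\kappa_t^{-2}V_{t-1}(L_t\psi-m_t(\psi)L_t\mathbb{1})$; $V_{t,t}(\psi,\phi)=\frac12(V_t(\psi+\phi)-V_t(\psi)-V_t(\phi))$; for $r<t$, $V_{r,t}(\psi_r,\psi_t)=\kappa_t^{-1}V_{r,t-1}(\psi_r,L_t(\psi_t-m_t(\psi_t)))$, $V_{t,r}=V_{r,t}$ (with arguments swapped). $\mathbf V_T(\psi_{0:T})=(V_{s,t}(\psi_s,\psi_t))_{0\le s,t\le T}$. *)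

theory Defs
  imports "HOL-Analysis.Analysis"
begin

text \<open>State space: a Euclidean space 'a (= R^d), reference measure mu.
  a0: initial density; a t x x': transition density at time t; b t x y: observation density;
  y t: the fixed observations.\<close>

definition onefun :: "'a \<Rightarrow> real" where "onefun = (\<lambda>_. 1)"

primrec filt :: "'a measure \<Rightarrow> ('a \<Rightarrow> real) \<Rightarrow> (nat \<Rightarrow> 'a \<Rightarrow> 'a \<Rightarrow> real)
    \<Rightarrow> (nat \<Rightarrow> 'a \<Rightarrow> 'b \<Rightarrow> real) \<Rightarrow> (nat \<Rightarrow> 'b) \<Rightarrow> nat \<Rightarrow> 'a \<Rightarrow> real" where
  "filt mu a0 a b y 0 = a0"
| "filt mu a0 a b y (Suc t) =
    (let g = (\<lambda>x. b (Suc t) x (y (Suc t)) * (\<integral>u. filt mu a0 a b y t u * a (Suc t) u x \<partial>mu))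
     in (\<lambda>x. g x / (\<integral>z. g z \<partial>mu)))"

definition mt :: "'a measure \<Rightarrow> ('a \<Rightarrow> real) \<Rightarrow> (nat \<Rightarrow> 'a \<Rightarrow> 'a \<Rightarrow> real)
    \<Rightarrow> (nat \<Rightarrow> 'a \<Rightarrow> 'b \<Rightarrow> real) \<Rightarrow> (nat \<Rightarrow> 'b) \<Rightarrow> nat \<Rightarrow> ('a \<Rightarrow> real) \<Rightarrow> real" where
  "mt mu a0 a b y t psi = (\<integral>x. psi x * filt mu a0 a b y t x \<partial>mu)"

definition Lop :: "'a measure \<Rightarrow> (nat \<Rightarrow> 'a \<Rightarrow> 'a \<Rightarrow> real)
    \<Rightarrow> (nat \<Rightarrow> 'a \<Rightarrow> 'b \<Rightarrow> real) \<Rightarrow> (nat \<Rightarrow> 'b) \<Rightarrow> nat \<Rightarrow> ('a \<Rightarrow> real) \<Rightarrow> 'a \<Rightarrow> real" where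
  "Lop mu a b y t psi x = (\<integral>u. a t x u * b t u (y t) * psi u \<partial>mu)"

definition kappa :: "'a measure \<Rightarrow> ('a \<Rightarrow> real) \<Rightarrow> (nat \<Rightarrow> 'a \<Rightarrow> 'a \<Rightarrow> real)
    \<Rightarrow> (nat \<Rightarrow> 'a \<Rightarrow> 'b \<Rightarrow> real) \<Rightarrow> (nat \<Rightarrow> 'b) \<Rightarrow> nat \<Rightarrow> real" where
  "kappa mu a0 a b y t = (\<integral>x. Lop mu a b y t onefun x * filt mu a0 a b y (t - 1) x \<partial>mu)"

definition sigma2 :: "'a measure \<Rightarrow> ('a \<Rightarrow> real) \<Rightarrow> (nat \<Rightarrow> 'a \<Rightarrow> 'a \<Rightarrow> real)
    \<Rightarrow> (nat \<Rightarrow> 'a \<Rightarrow> 'b \<Rightarrow> real) \<Rightarrow> (nat \<Rightarrow> 'b) \<Rightarrow> nat \<Rightarrow> ('a \<Rightarrow> real) \<Rightarrow> real" where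
  "sigma2 mu a0 a b y t psi =
     (\<integral>x. (psi x - mt mu a0 a b y t psi)\<^sup>2 * filt mu a0 a b y t x \<partial>mu)"

primrec Vt :: "'a measure \<Rightarrow> ('a \<Rightarrow> real) \<Rightarrow> (nat \<Rightarrow> 'a \<Rightarrow> 'a \<Rightarrow> real)
    \<Rightarrow> (nat \<Rightarrow> 'a \<Rightarrow> 'b \<Rightarrow> real) \<Rightarrow> (nat \<Rightarrow> 'b) \<Rightarrow> nat \<Rightarrow> ('a \<Rightarrow> real) \<Rightarrow> real" where
  "Vt mu a0 a b y 0 psi = sigma2 mu a0 a b y 0 psi"
| "Vt mu a0 a b y (Suc t) psi =
     sigma2 mu a0 a b y (Suc t) psi
     + (kappa mu a0 a b y (Suc t))\<^sup>2 powi (-1) *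
       Vt mu a0 a b y t (\<lambda>x. Lop mu a b y (Suc t) psi x
                               - mt mu a0 a b y (Suc t) psi * Lop mu a b y (Suc t) onefun x)"

definition Vdiag :: "'a measure \<Rightarrow> ('a \<Rightarrow> real) \<Rightarrow> (nat \<Rightarrow> 'a \<Rightarrow> 'a \<Rightarrow> real)
    \<Rightarrow> (nat \<Rightarrow> 'a \<Rightarrow> 'b \<Rightarrow> real) \<Rightarrow> (nat \<Rightarrow> 'b) \<Rightarrow> nat \<Rightarrow> ('a \<Rightarrow> real) \<Rightarrow> ('a \<Rightarrow> real) \<Rightarrow> real" where
  "Vdiag mu a0 a b y t psi phi =
     (Vt mu a0 a b y t (\<lambda>x. psi x + phi x) - Vt mu a0 a b y t psi - Vt mu a0 a b y t phi) / 2"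

primrec Vcross :: "'a measure \<Rightarrow> ('a \<Rightarrow> real) \<Rightarrow> (nat \<Rightarrow> 'a \<Rightarrow> 'a \<Rightarrow> real)
    \<Rightarrow> (nat \<Rightarrow> 'a \<Rightarrow> 'b \<Rightarrow> real) \<Rightarrow> (nat \<Rightarrow> 'b) \<Rightarrow> nat \<Rightarrow> nat
    \<Rightarrow> ('a \<Rightarrow> real) \<Rightarrow> ('a \<Rightarrow> real) \<Rightarrow> real" where
  "Vcross mu a0 a b y r 0 psir psit = Vdiag mu a0 a b y r psir psit"
| "Vcross mu a0 a b y r (Suc k) psir psit =
     inverse (kappa mu a0 a b y (r + Suc k)) *
     Vcross mu a0 a b y r k psir
       (Lop mu a b y (r + Suc k) (\<lambda>u. psit u - mt mu a0 a b y (r + Suc k) psit))"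

definition Vst :: "'a measure \<Rightarrow> ('a \<Rightarrow> real) \<Rightarrow> (nat \<Rightarrow> 'a \<Rightarrow> 'a \<Rightarrow> real)
    \<Rightarrow> (nat \<Rightarrow> 'a \<Rightarrow> 'b \<Rightarrow> real) \<Rightarrow> (nat \<Rightarrow> 'b) \<Rightarrow> nat \<Rightarrow> nat
    \<Rightarrow> ('a \<Rightarrow> real) \<Rightarrow> ('a \<Rightarrow> real) \<Rightarrow> real" where
  "Vst mu a0 a b y s t psis psit =
     (if s \<le> t then Vcross mu a0 a b y s (t - s) psis psit
      else Vcross mu a0 a b y t (s - t) psit psis)"

definition quadV :: "'a measure \<Rightarrow> ('a \<Rightarrow> real) \<Rightarrow> (nat \<Rightarrow> 'a \<Rightarrow> 'a \<Rightarrow> real)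
    \<Rightarrow> (nat \<Rightarrow> 'a \<Rightarrow> 'b \<Rightarrow> real) \<Rightarrow> (nat \<Rightarrow> 'b) \<Rightarrow> nat
    \<Rightarrow> (nat \<Rightarrow> 'a \<Rightarrow> real) \<Rightarrow> (nat \<Rightarrow> real) \<Rightarrow> real" where
  "quadV mu a0 a b y T psi lam =
     (\<Sum>s\<in>{0..T}. \<Sum>t\<in>{0..T}. lam s * lam t * Vst mu a0 a b y s t (psi s) (psi t))"

end

(*
  Each V_t is a quadratic form on bounded measurable functions (induction on t, since
  f |-> L_t(f - m_t f) is linear), so V_{t,t} is its polar bilinear form and every V_{r,t}
  is linear in its second argument. By the recursions, the last column of V_T(psi_0..psi_T)
  is kappa_T^-1 times the (T-1)-th column of V_{T-1} evaluated at chi = L_T(psi_T - m_T psi_T),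
  and V_T(psi_T) = sigma_T^2(psi_T) + kappa_T^-2 V_{T-1}(chi). Hence the T-th coordinate can
  be folded into the (T-1)-th one by bilinearity, which replaces psi_{T-1} by rho_{T-1};
  the only term that is not absorbed is lam_T^2 sigma_T^2(psi_T).
*)
theory Submission
  imports Defs
begin

definition bounded_borel :: "('a::topological_space \<Rightarrow> real) set" where
  "bounded_borel = {f. f \<in> borel_measurable borel \<and> bounded (range f)}"

lemma bounded_borel_lincomb:
  assumes "f \<in> bounded_borel" "g \<in> bounded_borel"
  shows "(\<lambda>x. c * f x + d * g x) \<in> bounded_borel"
proof -
  have "bounded (range (\<lambda>x. c * f x + d * g x))"
    using assms bounded_plus_comp[OF bounded_scaleR_comp[of f UNIV c] bounded_scaleR_comp[of g UNIV d]]
    by (simp add: bounded_borel_def)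
  moreover have "f \<in> borel_measurable borel" "g \<in> borel_measurable borel"
    using assms by (simp_all add: bounded_borel_def)
  then have "(\<lambda>x. c * f x + d * g x) \<in> borel_measurable borel"
    by measurable
  ultimately show ?thesis by (simp add: bounded_borel_def)
qed

lemma bounded_borel_const: "(\<lambda>x. c) \<in> bounded_borel"
  by (simp add: bounded_borel_def)

lemma bounded_borel_diff_const: "f \<in> bounded_borel \<Longrightarrow> (\<lambda>x. f x - c) \<in> bounded_borel"
  using bounded_borel_lincomb[OF _ bounded_borel_const, of f 1 "- 1" c] by simp

lemma integrable_bounded_borel_mult:
  assumes sets_M: "sets M = sets borel" and h: "h \<in> bounded_borel" and f: "integrable M f"
  shows "integrable M (\<lambda>x. h x * f x)"
proof -
  obtain B where B: "\<And>x. \<bar>h x\<bar> \<le> B"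
    using h by (auto simp: bounded_borel_def bounded_iff)
  show ?thesis
  proof (rule Bochner_Integration.integrable_bound[where f = "\<lambda>x. B * f x"])
    show "integrable M (\<lambda>x. B * f x)"
      using f by simp
    show "AE x in M. norm (h x * f x) \<le> norm (B * f x)"
    proof (intro AE_I2)
      fix x
      have "\<bar>h x\<bar> * \<bar>f x\<bar> \<le> \<bar>B\<bar> * \<bar>f x\<bar>"
        using B[of x] by (intro mult_right_mono) auto
      then show "norm (h x * f x) \<le> norm (B * f x)"
        by (simp add: abs_mult)
    qed
    have "h \<in> borel_measurable M"
      unfolding measurable_cong_sets[OF sets_M refl] using h by (simp add: bounded_borel_def)
    then show "(\<lambda>x. h x * f x) \<in> borel_measurable M"
      using f by measurable
  qed
qed

definition symmetric_bilinear_on ::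
    "('a \<Rightarrow> real) set \<Rightarrow> (('a \<Rightarrow> real) \<Rightarrow> ('a \<Rightarrow> real) \<Rightarrow> real) \<Rightarrow> bool" where
  "symmetric_bilinear_on H B \<longleftrightarrow>
     (\<forall>f\<in>H. \<forall>g\<in>H. B f g = B g f) \<and>
     (\<forall>f\<in>H. \<forall>g\<in>H. \<forall>h\<in>H. \<forall>c d. B (\<lambda>x. c * f x + d * g x) h = c * B f h + d * B g h)"

definition quadratic_form_on :: "('a \<Rightarrow> real) set \<Rightarrow> (('a \<Rightarrow> real) \<Rightarrow> real) \<Rightarrow> bool" where
  "quadratic_form_on H Q \<longleftrightarrow> (\<exists>B. symmetric_bilinear_on H B \<and> (\<forall>f\<in>H. Q f = B f f))"

definition polar_form :: "(('a \<Rightarrow> real) \<Rightarrow> real) \<Rightarrow> ('a \<Rightarrow> real) \<Rightarrow> ('a \<Rightarrow> real) \<Rightarrow> real" where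
  "polar_form Q f g = (Q (\<lambda>x. f x + g x) - Q f - Q g) / 2"

lemma symmetric_bilinear_on_commute:
  "symmetric_bilinear_on H B \<Longrightarrow> f \<in> H \<Longrightarrow> g \<in> H \<Longrightarrow> B f g = B g f"
  unfolding symmetric_bilinear_on_def by blast

lemma symmetric_bilinear_on_left:
  "symmetric_bilinear_on H B \<Longrightarrow> f \<in> H \<Longrightarrow> g \<in> H \<Longrightarrow> h \<in> H \<Longrightarrow>
    B (\<lambda>x. c * f x + d * g x) h = c * B f h + d * B g h"
  unfolding symmetric_bilinear_on_def by blast

lemma symmetric_bilinear_on_right:
  assumes "symmetric_bilinear_on bounded_borel B"
    and "f \<in> bounded_borel" "g \<in> bounded_borel" "h \<in> bounded_borel"
  shows "B h (\<lambda>x. c * f x + d * g x) = c * B h f + d * B h g"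
  using assms bounded_borel_lincomb[of f g c d]
  by (simp add: symmetric_bilinear_on_left symmetric_bilinear_on_commute[of _ B h])

lemma polar_form_eq:
  assumes B: "symmetric_bilinear_on bounded_borel B" and Q: "\<forall>f\<in>bounded_borel. Q f = B f f"
    and f: "f \<in> bounded_borel" and g: "g \<in> bounded_borel"
  shows "polar_form Q f g = B f g"
proof -
  have fg: "(\<lambda>x. 1 * f x + 1 * g x) \<in> bounded_borel"
    using f g by (rule bounded_borel_lincomb)
  have "Q (\<lambda>x. f x + g x) = B f f + B f g + B g f + B g g"
    using Q fg symmetric_bilinear_on_left[OF B f g, of _ 1 1]
      symmetric_bilinear_on_right[OF B f g, of _ 1 1] f g by simp
  then show ?thesis
    using Q f g symmetric_bilinear_on_commute[OF B f g] by (simp add: polar_form_def)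
qed

lemma symmetric_bilinear_on_polar_form:
  assumes "quadratic_form_on bounded_borel Q"
  shows "symmetric_bilinear_on bounded_borel (polar_form Q)"
proof -
  obtain B where B: "symmetric_bilinear_on bounded_borel B" "\<forall>f\<in>bounded_borel. Q f = B f f"
    using assms by (auto simp: quadratic_form_on_def)
  show ?thesis
    unfolding symmetric_bilinear_on_def
  proof (intro conjI ballI allI)
    fix f g :: "'a \<Rightarrow> real" assume "f \<in> bounded_borel" "g \<in> bounded_borel"
    then show "polar_form Q f g = polar_form Q g f"
      using polar_form_eq[OF B] symmetric_bilinear_on_commute[OF B(1)] by simp
  next
    fix f g h :: "'a \<Rightarrow> real" and c d :: real
    assume fgh: "f \<in> bounded_borel" "g \<in> bounded_borel" "h \<in> bounded_borel"
    then show "polar_form Q (\<lambda>x. c * f x + d * g x) h = c * polar_form Q f h + d * polar_form Q g h"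
      using polar_form_eq[OF B] bounded_borel_lincomb[OF fgh(1,2)]
        symmetric_bilinear_on_left[OF B(1) fgh] by simp
  qed
qed

lemma polar_form_self:
  assumes "quadratic_form_on bounded_borel Q" "f \<in> bounded_borel"
  shows "polar_form Q f f = Q f"
  using assms polar_form_eq[of _ Q f f] by (auto simp: quadratic_form_on_def)

lemma quadratic_form_on_lincomb:
  assumes Q: "quadratic_form_on bounded_borel Q" and f: "f \<in> bounded_borel" and g: "g \<in> bounded_borel"
  shows "Q (\<lambda>x. c * f x + d * g x) = c\<^sup>2 * Q f + 2 * c * d * polar_form Q f g + d\<^sup>2 * Q g"
proof -
  obtain B where B: "symmetric_bilinear_on bounded_borel B" "\<forall>f\<in>bounded_borel. Q f = B f f"
    using Q by (auto simp: quadratic_form_on_def)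
  show ?thesis
    using B f g bounded_borel_lincomb[OF f g, of c d] polar_form_eq[OF B f g]
      symmetric_bilinear_on_left[OF B(1) f g] symmetric_bilinear_on_right[OF B(1) f g]
      symmetric_bilinear_on_commute[OF B(1) f g]
    by (simp add: power2_eq_square algebra_simps)
qed

lemma quadratic_form_on_add_compose:
  assumes S: "quadratic_form_on H S" and Q: "quadratic_form_on H Q"
    and G_mem: "\<And>f. f \<in> H \<Longrightarrow> G f \<in> H"
    and G_lincomb: "\<And>f g c d. f \<in> H \<Longrightarrow> g \<in> H \<Longrightarrow>
      G (\<lambda>x. c * f x + d * g x) = (\<lambda>x. c * G f x + d * G g x)"
    and Q': "\<And>f. f \<in> H \<Longrightarrow> Q' f = S f + k * Q (G f)"
  shows "quadratic_form_on H Q'"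
proof -
  obtain BS where BS: "symmetric_bilinear_on H BS" "\<forall>f\<in>H. S f = BS f f"
    using S by (auto simp: quadratic_form_on_def)
  obtain BQ where BQ: "symmetric_bilinear_on H BQ" "\<forall>f\<in>H. Q f = BQ f f"
    using Q by (auto simp: quadratic_form_on_def)
  have "symmetric_bilinear_on H (\<lambda>f g. BS f g + k * BQ (G f) (G g))"
    using BS(1) BQ(1) G_mem
    by (auto simp: symmetric_bilinear_on_def G_lincomb algebra_simps)
  moreover have "\<forall>f\<in>H. Q' f = BS f f + k * BQ (G f) (G f)"
    using BS(2) BQ(2) G_mem Q' by simp
  ultimately show ?thesis
    unfolding quadratic_form_on_def by blast
qed

lemma sum_lessThan_Suc_square:
  fixes f :: "nat \<Rightarrow> nat \<Rightarrow> 'a::comm_semiring_1"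
  assumes "\<And>s. s < m \<Longrightarrow> f m s = f s m"
  shows "(\<Sum>s<Suc m. \<Sum>t<Suc m. f s t) = (\<Sum>s<m. \<Sum>t<m. f s t) + 2 * (\<Sum>s<m. f s m) + f m m"
  using assms by (simp add: sum.distrib mult_2 algebra_simps)

lemma quadV_split_last:
  "quadV mu a0 a b y m psi lam =
     (\<Sum>s<m. \<Sum>t<m. lam s * lam t * Vst mu a0 a b y s t (psi s) (psi t))
     + 2 * (\<Sum>s<m. lam s * lam m * Vst mu a0 a b y s m (psi s) (psi m))
     + (lam m)\<^sup>2 * Vst mu a0 a b y m m (psi m) (psi m)"
proof -
  have "quadV mu a0 a b y m psi lam =
      (\<Sum>s<Suc m. \<Sum>t<Suc m. lam s * lam t * Vst mu a0 a b y s t (psi s) (psi t))"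
    unfolding quadV_def by (simp add: atLeast0AtMost lessThan_Suc_atMost)
  also have "\<dots> = (\<Sum>s<m. \<Sum>t<m. lam s * lam t * Vst mu a0 a b y s t (psi s) (psi t))
     + 2 * (\<Sum>s<m. lam s * lam m * Vst mu a0 a b y s m (psi s) (psi m))
     + lam m * lam m * Vst mu a0 a b y m m (psi m) (psi m)"
    by (rule sum_lessThan_Suc_square) (simp add: Vst_def)
  finally show ?thesis
    by (simp add: power2_eq_square)
qed

locale hmm_filter =
  fixes mu :: "('a::euclidean_space) measure"
    and a0 :: "'a \<Rightarrow> real"
    and a :: "nat \<Rightarrow> 'a \<Rightarrow> 'a \<Rightarrow> real"
    and b :: "nat \<Rightarrow> 'a \<Rightarrow> 'b \<Rightarrow> real"
    and y :: "nat \<Rightarrow> 'b"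
    and T :: nat
  assumes mu_sets: "sets mu = sets borel"
    and mu_sf: "sigma_finite_measure mu"
    and a0_int: "integrable mu a0"
    and a_meas: "\<And>t. (\<lambda>(x, u). a t x u) \<in> borel_measurable borel"
    and a_nonneg: "\<And>t x u. a t x u \<ge> 0"
    and b_meas: "\<And>t. (\<lambda>x. b t x (y t)) \<in> borel_measurable borel"
    and b_nonneg: "\<And>t x v. b t x v \<ge> 0"
    and A0_bdd: "\<And>t. 1 \<le> t \<Longrightarrow> t \<le> T \<Longrightarrow> bdd_above (range (Lop mu a b y t onefun))"
    and A0_pos: "\<And>t x. 1 \<le> t \<Longrightarrow> t \<le> T \<Longrightarrow> Lop mu a b y t onefun x > 0"
begin

lemma integrable_filt: "integrable mu (filt mu a0 a b y t)"
proof (cases t)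
  case 0
  then show ?thesis using a0_int by simp
next
  case (Suc s)
  define g where "g x = b t x (y t) * (\<integral>u. filt mu a0 a b y s u * a t u x \<partial>mu)" for x
  have "filt mu a0 a b y t = (\<lambda>x. g x / (\<integral>z. g z \<partial>mu))"
    by (simp add: Suc g_def)
  then show ?thesis
    by (cases "integrable mu g") (simp_all add: not_integrable_integral_eq)
qed

lemma mt_lincomb:
  assumes "f \<in> bounded_borel" "g \<in> bounded_borel"
  shows "mt mu a0 a b y t (\<lambda>x. c * f x + d * g x) = c * mt mu a0 a b y t f + d * mt mu a0 a b y t g"
proof -
  have "integrable mu (\<lambda>x. f x * filt mu a0 a b y t x)" "integrable mu (\<lambda>x. g x * filt mu a0 a b y t x)"
    using assms by (simp_all add: integrable_bounded_borel_mult[OF mu_sets _ integrable_filt])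
  then show ?thesis
    by (simp add: mt_def distrib_right mult.assoc)
qed

text \<open>A non-integrable kernel would give \<open>Lop mu a b y t onefun x = 0\<close>, contradicting A-0.\<close>
lemma integrable_Lop_kernel:
  assumes "1 \<le> t" "t \<le> T"
  shows "integrable mu (\<lambda>u. a t x u * b t u (y t))"
proof (rule ccontr)
  assume "\<not> ?thesis"
  then have "Lop mu a b y t onefun x = 0"
    by (simp add: Lop_def onefun_def not_integrable_integral_eq)
  with A0_pos[OF assms, of x] show False by simp
qed

lemma integrable_Lop_integrand:
  assumes "1 \<le> t" "t \<le> T" "f \<in> bounded_borel"
  shows "integrable mu (\<lambda>u. a t x u * b t u (y t) * f u)"
  using integrable_bounded_borel_mult[OF mu_sets assms(3) integrable_Lop_kernel[OF assms(1,2)]]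
  by (simp add: mult.commute)

lemma Lop_lincomb:
  assumes "1 \<le> t" "t \<le> T" "f \<in> bounded_borel" "g \<in> bounded_borel"
  shows "Lop mu a b y t (\<lambda>x. c * f x + d * g x) = (\<lambda>x. c * Lop mu a b y t f x + d * Lop mu a b y t g x)"
  using integrable_Lop_integrand[OF assms(1,2,3)] integrable_Lop_integrand[OF assms(1,2,4)]
  by (simp add: Lop_def fun_eq_iff distrib_left mult.left_commute)

lemma Lop_measurable:
  assumes "f \<in> bounded_borel"
  shows "Lop mu a b y t f \<in> borel_measurable borel"
proof -
  have f: "f \<in> borel_measurable borel"
    using assms by (simp add: bounded_borel_def)
  have "(\<lambda>(x, u). a t x u) \<in> borel_measurable (borel \<Otimes>\<^sub>M borel)"
    using a_meas[of t] by (simp add: borel_prod)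
  then have "(\<lambda>p. (\<lambda>(x, u). a t x u) p * b t (snd p) (y t) * f (snd p))
      \<in> borel_measurable (borel \<Otimes>\<^sub>M borel)"
    using b_meas[of t] f by measurable
  then have "(\<lambda>(x, u). a t x u * b t u (y t) * f u) \<in> borel_measurable (borel \<Otimes>\<^sub>M mu)"
    by (simp add: case_prod_beta measurable_cong_sets[OF sets_pair_measure_cong[OF refl mu_sets] refl])
  from sigma_finite_measure.borel_measurable_lebesgue_integral[OF mu_sf this]
  show ?thesis
    unfolding Lop_def[abs_def] by simp
qed

lemma Lop_bounded_borel:
  assumes t: "1 \<le> t" "t \<le> T" and f: "f \<in> bounded_borel"
  shows "Lop mu a b y t f \<in> bounded_borel"
proof -
  obtain B where B: "\<And>u. \<bar>f u\<bar> \<le> B"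
    using f by (auto simp: bounded_borel_def bounded_iff)
  obtain S where S: "\<And>x. Lop mu a b y t onefun x \<le> S"
    using A0_bdd[OF t] by (auto simp: bdd_above_def)
  have "\<bar>Lop mu a b y t f x\<bar> \<le> B * S" for x
  proof -
    have "\<bar>Lop mu a b y t f x\<bar> \<le> (\<integral>u. B * (a t x u * b t u (y t)) \<partial>mu)"
      unfolding Lop_def
    proof (rule integral_abs_bound_integral)
      fix u
      have "\<bar>a t x u * b t u (y t) * f u\<bar> = a t x u * b t u (y t) * \<bar>f u\<bar>"
        by (simp add: abs_mult a_nonneg b_nonneg)
      also have "\<dots> \<le> a t x u * b t u (y t) * B"
        using B[of u] by (intro mult_left_mono) (simp_all add: a_nonneg b_nonneg)
      finally show "\<bar>a t x u * b t u (y t) * f u\<bar> \<le> B * (a t x u * b t u (y t))"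
        by (simp add: mult.commute)
    qed (use integrable_Lop_integrand[OF t f] integrable_Lop_kernel[OF t] in simp_all)
    also have "\<dots> = B * Lop mu a b y t onefun x"
      by (simp add: Lop_def onefun_def)
    also have "\<dots> \<le> B * S"
      using S B[of x] by (intro mult_left_mono) auto
    finally show ?thesis .
  qed
  then have "bounded (range (Lop mu a b y t f))"
    by (auto simp: bounded_iff)
  then show ?thesis
    using Lop_measurable[OF f] by (simp add: bounded_borel_def)
qed

lemma sigma2_quadratic_form: "quadratic_form_on bounded_borel (sigma2 mu a0 a b y t)"
proof -
  define m where "m = mt mu a0 a b y t"
  define B where "B f g = (\<integral>x. (f x - m f) * ((g x - m g) * filt mu a0 a b y t x) \<partial>mu)" for f g
  have integrable: "integrable mu (\<lambda>x. (f x - m f) * ((g x - m g) * filt mu a0 a b y t x))"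
    if "f \<in> bounded_borel" "g \<in> bounded_borel" for f g
    using that by (intro integrable_bounded_borel_mult[OF mu_sets] integrable_filt bounded_borel_diff_const)
  have "symmetric_bilinear_on bounded_borel B"
    unfolding symmetric_bilinear_on_def
  proof (intro conjI ballI allI)
    fix f g :: "'a \<Rightarrow> real"
    show "B f g = B g f"
      by (simp add: B_def algebra_simps)
  next
    fix f g h :: "'a \<Rightarrow> real" and c d :: real
    assume fgh: "f \<in> bounded_borel" "g \<in> bounded_borel" "h \<in> bounded_borel"
    have "B (\<lambda>x. c * f x + d * g x) h = (\<integral>x. c * ((f x - m f) * ((h x - m h) * filt mu a0 a b y t x))
        + d * ((g x - m g) * ((h x - m h) * filt mu a0 a b y t x)) \<partial>mu)"
      using mt_lincomb[OF fgh(1,2)] by (simp add: B_def m_def algebra_simps)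
    also have "\<dots> = c * B f h + d * B g h"
      using integrable[OF fgh(1,3)] integrable[OF fgh(2,3)] by (simp add: B_def)
    finally show "B (\<lambda>x. c * f x + d * g x) h = c * B f h + d * B g h" .
  qed
  moreover have "sigma2 mu a0 a b y t f = B f f" for f
    by (simp add: sigma2_def B_def m_def power2_eq_square mult.assoc)
  ultimately show ?thesis
    unfolding quadratic_form_on_def by blast
qed

definition Lop_centered :: "nat \<Rightarrow> ('a \<Rightarrow> real) \<Rightarrow> 'a \<Rightarrow> real" where
  "Lop_centered t f = Lop mu a b y t (\<lambda>u. f u - mt mu a0 a b y t f)"

lemma Lop_centered_bounded_borel:
  "1 \<le> t \<Longrightarrow> t \<le> T \<Longrightarrow> f \<in> bounded_borel \<Longrightarrow> Lop_centered t f \<in> bounded_borel"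
  unfolding Lop_centered_def by (intro Lop_bounded_borel bounded_borel_diff_const)

lemma Lop_centered_lincomb:
  assumes "1 \<le> t" "t \<le> T" "f \<in> bounded_borel" "g \<in> bounded_borel"
  shows "Lop_centered t (\<lambda>x. c * f x + d * g x) = (\<lambda>x. c * Lop_centered t f x + d * Lop_centered t g x)"
proof -
  have "(\<lambda>u. c * f u + d * g u - mt mu a0 a b y t (\<lambda>x. c * f x + d * g x)) =
      (\<lambda>u. c * (f u - mt mu a0 a b y t f) + d * (g u - mt mu a0 a b y t g))"
    using mt_lincomb[OF assms(3,4)] by (simp add: algebra_simps)
  then show ?thesis
    using Lop_lincomb[OF assms(1,2) bounded_borel_diff_const bounded_borel_diff_const, OF assms(3,4)]
    by (simp add: Lop_centered_def)
qed

lemma Vt_Suc: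
  assumes "Suc t \<le> T" "f \<in> bounded_borel"
  shows "Vt mu a0 a b y (Suc t) f = sigma2 mu a0 a b y (Suc t) f
    + inverse ((kappa mu a0 a b y (Suc t))\<^sup>2) * Vt mu a0 a b y t (Lop_centered (Suc t) f)"
proof -
  have "Lop_centered (Suc t) f = (\<lambda>x. Lop mu a b y (Suc t) f x
      - mt mu a0 a b y (Suc t) f * Lop mu a b y (Suc t) onefun x)"
    using Lop_lincomb[OF _ assms(1,2) bounded_borel_const, of 1 "- mt mu a0 a b y (Suc t) f" 1]
    by (simp add: Lop_centered_def onefun_def[symmetric])
  then show ?thesis
    by (simp add: power_int_minus)
qed

lemma Vt_quadratic_form: "t \<le> T \<Longrightarrow> quadratic_form_on bounded_borel (Vt mu a0 a b y t)"
proof (induction t)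
  case 0
  then show ?case
    using sigma2_quadratic_form[of 0] by simp
next
  case (Suc t)
  show ?case
  proof (rule quadratic_form_on_add_compose[OF sigma2_quadratic_form Suc.IH])
    show "Vt mu a0 a b y (Suc t) f = sigma2 mu a0 a b y (Suc t) f
        + inverse ((kappa mu a0 a b y (Suc t))\<^sup>2) * Vt mu a0 a b y t (Lop_centered (Suc t) f)"
      if "f \<in> bounded_borel" for f
      using Vt_Suc[OF Suc.prems that] .
  qed (use Suc.prems in \<open>simp_all add: Lop_centered_bounded_borel Lop_centered_lincomb\<close>)
qed

lemma Vdiag_eq_polar_form: "Vdiag mu a0 a b y t = polar_form (Vt mu a0 a b y t)"
  by (simp add: fun_eq_iff Vdiag_def polar_form_def)

lemma Vcross_lincomb_right:
  assumes "s + k \<le> T" "h \<in> bounded_borel" "f \<in> bounded_borel" "g \<in> bounded_borel"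
  shows "Vcross mu a0 a b y s k h (\<lambda>x. c * f x + d * g x)
    = c * Vcross mu a0 a b y s k h f + d * Vcross mu a0 a b y s k h g"
  using assms
proof (induction k arbitrary: f g c d)
  case 0
  then show ?case
    using symmetric_bilinear_on_right[OF symmetric_bilinear_on_polar_form[OF Vt_quadratic_form]]
    by (simp add: Vdiag_eq_polar_form)
next
  case (Suc k)
  have t: "1 \<le> s + Suc k" "s + Suc k \<le> T"
    using Suc.prems by simp_all
  then show ?case
    using Suc.prems Suc.IH[of "Lop_centered (s + Suc k) f" "Lop_centered (s + Suc k) g"]
    by (simp add: Lop_centered_def[symmetric] Lop_centered_lincomb Lop_centered_bounded_borel
        algebra_simps)
qed

lemma Vst_lincomb_right:
  assumes "s \<le> t" "t \<le> T" "h \<in> bounded_borel" "f \<in> bounded_borel" "g \<in> bounded_borel"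
  shows "Vst mu a0 a b y s t h (\<lambda>x. c * f x + d * g x)
    = c * Vst mu a0 a b y s t h f + d * Vst mu a0 a b y s t h g"
  using assms Vcross_lincomb_right[of s "t - s"] by (simp add: Vst_def)

lemma Vst_Suc_right:
  "s \<le> n \<Longrightarrow> Vst mu a0 a b y s (Suc n) f g
    = inverse (kappa mu a0 a b y (Suc n)) * Vst mu a0 a b y s n f (Lop_centered (Suc n) g)"
  by (simp add: Vst_def Suc_diff_le Lop_centered_def)

lemma Vst_self: "t \<le> T \<Longrightarrow> f \<in> bounded_borel \<Longrightarrow> Vst mu a0 a b y t t f f = Vt mu a0 a b y t f"
  by (simp add: Vst_def Vdiag_eq_polar_form polar_form_self Vt_quadratic_form)

lemma Vst_self_lincomb:
  assumes "t \<le> T" "f \<in> bounded_borel" "g \<in> bounded_borel"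
  shows "Vst mu a0 a b y t t (\<lambda>x. c * f x + d * g x) (\<lambda>x. c * f x + d * g x)
    = c\<^sup>2 * Vst mu a0 a b y t t f f + 2 * c * d * Vst mu a0 a b y t t f g + d\<^sup>2 * Vst mu a0 a b y t t g g"
  using quadratic_form_on_lincomb[OF Vt_quadratic_form[OF assms(1)] assms(2,3)]
  by (simp add: assms bounded_borel_lincomb Vst_self)
    (simp add: Vst_def Vdiag_eq_polar_form)

lemma quadV_fold_last:
  fixes psi :: "nat \<Rightarrow> 'a \<Rightarrow> real" and lam :: "nat \<Rightarrow> real"
  assumes n: "Suc n \<le> T" and psi: "\<And>t. t \<le> Suc n \<Longrightarrow> psi t \<in> bounded_borel"
  defines "rho \<equiv> \<lambda>x. lam n * psi n x
    + lam (Suc n) / kappa mu a0 a b y (Suc n) * Lop_centered (Suc n) (psi (Suc n)) x"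
  shows "quadV mu a0 a b y n (psi(n := rho)) (lam(n := 1))
    = quadV mu a0 a b y (Suc n) psi lam - (lam (Suc n))\<^sup>2 * sigma2 mu a0 a b y (Suc n) (psi (Suc n))"
proof -
  define K where "K = kappa mu a0 a b y (Suc n)"
  define chi where "chi = Lop_centered (Suc n) (psi (Suc n))"
  define d where "d = lam (Suc n) / K"
  define V where "V s t = Vst mu a0 a b y s t (psi s) (psi t)" for s t
  define C where "C s = Vst mu a0 a b y s n (psi s) chi" for s
  define D where "D = Vst mu a0 a b y n n chi chi"
  define P where "P = (\<Sum>s<n. \<Sum>t<n. lam s * lam t * V s t)"
  have chi_bb: "chi \<in> bounded_borel"
    using n psi by (simp add: chi_def Lop_centered_bounded_borel)
  have psi_bb: "s \<le> n \<Longrightarrow> psi s \<in> bounded_borel" for s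
    using psi by simp
  have rho_eq: "rho = (\<lambda>x. lam n * psi n x + d * chi x)"
    by (simp add: rho_def d_def chi_def K_def)
  have col: "Vst mu a0 a b y s n (psi s) rho = lam n * V s n + d * C s" if "s \<le> n" for s
    unfolding rho_eq V_def C_def using that n psi_bb chi_bb by (simp add: Vst_lincomb_right)
  have diag: "Vst mu a0 a b y n n rho rho = (lam n)\<^sup>2 * V n n + 2 * lam n * d * C n + d\<^sup>2 * D"
    unfolding rho_eq V_def C_def D_def using n psi_bb chi_bb by (simp add: Vst_self_lincomb)
  have last_col: "V s (Suc n) = inverse K * C s" if "s \<le> n" for s
    using that by (simp add: V_def C_def K_def chi_def Vst_Suc_right)
  have last_diag: "V (Suc n) (Suc n) = sigma2 mu a0 a b y (Suc n) (psi (Suc n)) + inverse (K\<^sup>2) * D"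
    using n psi chi_bb by (simp add: V_def D_def K_def chi_def Vst_self Vt_Suc del: Vt.simps)
  have lhs: "quadV mu a0 a b y n (psi(n := rho)) (lam(n := 1))
      = P + 2 * (\<Sum>s<n. lam s * (lam n * V s n + d * C s)) + ((lam n)\<^sup>2 * V n n + 2 * lam n * d * C n + d\<^sup>2 * D)"
    unfolding quadV_split_last P_def
    by (intro arg_cong2[where f = "(+)"] arg_cong2[where f = "(*)"] sum.cong refl)
      (simp_all add: V_def col diag)
  have "quadV mu a0 a b y (Suc n) psi lam
      = (\<Sum>s<Suc n. \<Sum>t<Suc n. lam s * lam t * V s t) + 2 * (\<Sum>s<Suc n. lam s * lam (Suc n) * V s (Suc n))
        + (lam (Suc n))\<^sup>2 * V (Suc n) (Suc n)"
    unfolding quadV_split_last V_def ..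
  also have "(\<Sum>s<Suc n. \<Sum>t<Suc n. lam s * lam t * V s t)
      = P + 2 * (\<Sum>s<n. lam s * lam n * V s n) + lam n * lam n * V n n"
    unfolding P_def by (rule sum_lessThan_Suc_square) (simp add: V_def Vst_def)
  finally have rhs: "quadV mu a0 a b y (Suc n) psi lam
      = P + 2 * (\<Sum>s<n. lam s * lam n * V s n) + lam n * lam n * V n n
        + 2 * (\<Sum>s<Suc n. lam s * lam (Suc n) * (inverse K * C s))
        + (lam (Suc n))\<^sup>2 * (sigma2 mu a0 a b y (Suc n) (psi (Suc n)) + inverse (K\<^sup>2) * D)"
    by (simp add: last_col last_diag)
  show ?thesis
    unfolding lhs rhs d_def
    by (simp add: sum.distrib sum_distrib_left algebra_simps power2_eq_square divide_inverse)
qed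

end

theorem mainTheorem3:
  fixes mu :: "('a::euclidean_space) measure"
    and a0 :: "'a \<Rightarrow> real"
    and a :: "nat \<Rightarrow> 'a \<Rightarrow> 'a \<Rightarrow> real"
    and b :: "nat \<Rightarrow> 'a \<Rightarrow> 'b \<Rightarrow> real"
    and y :: "nat \<Rightarrow> 'b"
    and T :: nat
    and psi :: "nat \<Rightarrow> 'a \<Rightarrow> real"
    and lam :: "nat \<Rightarrow> real"
  assumes mu_sets: "sets mu = sets borel"
    and mu_sf: "sigma_finite_measure mu"
    and a0_meas: "a0 \<in> borel_measurable borel"
    and a0_nonneg: "\<And>x. a0 x \<ge> 0"
    and a0_int: "integrable mu a0" and a0_norm: "(\<integral>x. a0 x \<partial>mu) = 1"
    and a_meas: "\<And>t. (\<lambda>(x, u). a t x u) \<in> borel_measurable borel"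
    and a_nonneg: "\<And>t x u. a t x u \<ge> 0"
    and a_int: "\<And>t x. integrable mu (a t x)"
    and a_norm: "\<And>t x. (\<integral>u. a t x u \<partial>mu) = 1"
    and b_meas: "\<And>t. (\<lambda>x. b t x (y t)) \<in> borel_measurable borel"
    and b_nonneg: "\<And>t x v. b t x v \<ge> 0"
    and A0_bdd: "\<And>t. 1 \<le> t \<Longrightarrow> t \<le> T \<Longrightarrow> bdd_above (range (Lop mu a b y t onefun))"
    and A0_pos: "\<And>t x. 1 \<le> t \<Longrightarrow> t \<le> T \<Longrightarrow> Lop mu a b y t onefun x > 0"
    and A0_kappa: "\<And>t. 1 \<le> t \<Longrightarrow> t \<le> T \<Longrightarrow> kappa mu a0 a b y t > 0"
    and T_ge: "T \<ge> 1"
    and psi_meas: "\<And>t. t \<le> T \<Longrightarrow> psi t \<in> borel_measurable borel"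
    and psi_bdd: "\<And>t. t \<le> T \<Longrightarrow> bounded (range (psi t))"
  shows
    "(let rho = (\<lambda>x. lam (T - 1) * psi (T - 1) x
                   + lam T / kappa mu a0 a b y T *
                     Lop mu a b y T (\<lambda>u. psi T u - mt mu a0 a b y T (psi T)) x)
      in quadV mu a0 a b y (T - 1) (psi((T - 1) := rho)) (lam((T - 1) := 1)))
     = quadV mu a0 a b y T psi lam - (lam T)\<^sup>2 * sigma2 mu a0 a b y T (psi T)"
proof -
  interpret hmm_filter mu a0 a b y T
    by (rule hmm_filter.intro[OF mu_sets mu_sf a0_int a_meas a_nonneg b_meas b_nonneg A0_bdd A0_pos])
  obtain n where T: "T = Suc n"
    using T_ge by (cases T) auto
  have "psi t \<in> bounded_borel" if "t \<le> T" for t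
    using psi_meas[OF that] psi_bdd[OF that] by (simp add: bounded_borel_def)
  then show ?thesis
    using quadV_fold_last[of n psi lam] by (simp add: T Let_def Lop_centered_def)
qed

end
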